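(* Let $n\ge2$ and $\Gamma_n=\langle c,\mu\mid c^n\mu^{-3}c^n\mu^{-1}=1\rangle$ (the fundamental group of the 3-manifold $M_n$ obtained by gluing the exterior of the $(2,2n)$-torus link to the orientable $I$-bundle over the Klein bottle). Embed $X(\Gamma_n,\mathrm{SL}_2(\mathbb C))_{\mathrm{red}}$ in $\mathbb C^3$ via the coordinates $(t_c,t_\mu,t_{c\mu})$, and for $k=1,\dots,n-1$ let $$Y_k=\{(t_c,t_\mu,t_{c\mu})\in\mathbb C^3\mid t_\mu=0,\ t_c=2\cos(\pi k/n)\}.$$ Then each $Y_k$ is contained in $X(\Gamma_n,\mathrm{SL}_2(\mathbb C))_{\mathrm{red}}$ and is an irreducible component of it containing characters of simple representations.
   Context: $X(\Gamma,\mathrm{SL}_2(\mathbb C))_{\mathrm{red}}$ is the $\mathrm{SL}_2(\mathbb C)$-character variety (reduced character scheme) of $\Gamma$; $t_\gamma$ is the trace function of $\gamma$, and for a two-generated group the functions $t_c,t_\mu,t_{c\mu}$ generate the coordinate ring. A representation $\rho$ is simple if $\rho(\Gamma)$ spans $M_2(\mathbb C)$ linearly. *)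

theory Defs
  imports "HOL-Analysis.Analysis"
begin

type_synonym cmat = "complex^2^2"
type_synonym pt3 = "complex \<times> complex \<times> complex"

fun mpow :: "cmat \<Rightarrow> nat \<Rightarrow> cmat" where
  "mpow A 0 = mat 1"
| "mpow A (Suc m) = A ** mpow A m"

text \<open>Representations of Gamma_n = < c, mu | c^n mu^-3 c^n mu^-1 = 1 > into SL_2(C),
  given by the images A = rho(c), B = rho(mu).\<close>
definition is_rep :: "nat \<Rightarrow> cmat \<Rightarrow> cmat \<Rightarrow> bool" where
  "is_rep n A B \<longleftrightarrow> det A = 1 \<and> det B = 1 \<and>
     mpow A n ** mpow (matrix_inv B) 3 ** mpow A n ** matrix_inv B = mat 1"

inductive_set gen_group :: "cmat \<Rightarrow> cmat \<Rightarrow> cmat set" for A B where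
  one: "mat 1 \<in> gen_group A B"
| genA: "A \<in> gen_group A B"
| genB: "B \<in> gen_group A B"
| invA: "matrix_inv A \<in> gen_group A B"
| invB: "matrix_inv B \<in> gen_group A B"
| mult: "g \<in> gen_group A B \<Longrightarrow> h \<in> gen_group A B \<Longrightarrow> g ** h \<in> gen_group A B"

definition csmult :: "complex \<Rightarrow> cmat \<Rightarrow> cmat" where
  "csmult c M = (\<chi> i j. c * M $ i $ j)"

text \<open>rho is simple iff rho(Gamma) spans M_2(C) as a complex vector space.\<close>
definition simple_rep :: "cmat \<Rightarrow> cmat \<Rightarrow> bool" where
  "simple_rep A B \<longleftrightarrow> (\<forall>M :: cmat. \<exists>S c. finite S \<and> S \<subseteq> gen_group A B \<and>
       M = (\<Sum>g\<in>S. csmult (c g) g))"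

definition char_pt :: "cmat \<Rightarrow> cmat \<Rightarrow> pt3" where
  "char_pt A B = (trace A, trace B, trace (A ** B))"

text \<open>The (reduced) character variety, as a point set in C^3.\<close>
definition charvar :: "nat \<Rightarrow> pt3 set" where
  "charvar n = {char_pt A B | A B. is_rep n A B}"

inductive_set poly3 :: "(pt3 \<Rightarrow> complex) set" where
  const: "(\<lambda>_. a) \<in> poly3"
| px: "(\<lambda>(x,y,z). x) \<in> poly3"
| py: "(\<lambda>(x,y,z). y) \<in> poly3"
| pz: "(\<lambda>(x,y,z). z) \<in> poly3"
| add: "f \<in> poly3 \<Longrightarrow> g \<in> poly3 \<Longrightarrow> (\<lambda>p. f p + g p) \<in> poly3"
| mul: "f \<in> poly3 \<Longrightarrow> g \<in> poly3 \<Longrightarrow> (\<lambda>p. f p * g p) \<in> poly3"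

definition zariski_closed :: "pt3 set \<Rightarrow> bool" where
  "zariski_closed S \<longleftrightarrow> (\<exists>F \<subseteq> poly3. S = {p. \<forall>f\<in>F. f p = 0})"

definition zariski_irreducible :: "pt3 set \<Rightarrow> bool" where
  "zariski_irreducible Z \<longleftrightarrow> Z \<noteq> {} \<and>
     (\<forall>C1 C2. zariski_closed C1 \<and> zariski_closed C2 \<and> Z \<subseteq> C1 \<union> C2 \<longrightarrow> Z \<subseteq> C1 \<or> Z \<subseteq> C2)"

definition irreducible_component :: "pt3 set \<Rightarrow> pt3 set \<Rightarrow> bool" where
  "irreducible_component X Z \<longleftrightarrow> Z \<subseteq> X \<and> zariski_irreducible Z \<and>
     (\<forall>W. zariski_irreducible W \<and> Z \<subseteq> W \<and> W \<subseteq> X \<longrightarrow> W = Z)"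

definition Yk :: "nat \<Rightarrow> nat \<Rightarrow> pt3 set" where
  "Yk n k = {(tc, tm, tcm). tm = 0 \<and> tc = complex_of_real (2 * cos (pi * real k / real n))}"

end

theory Submission
  imports Defs "HOL-Computational_Algebra.Polynomial"
begin

text \<open>
  Let A = rho(c), B = rho(mu) and X = A^n, so that X commutes with A and the relator reads
  X B^-3 X B^-1 = 1.  Put W = X B^-3; then W X = B and W^2 = B^-2.  If tr B is nonzero,
  Cayley-Hamilton turns W^2 = B^-2 into W = s B^-1, hence X is a multiple of B^2 and A commutes
  with B, so the character lies on the surface kappa = 0 of reducible characters.  If tr B = 0 the
  relator becomes X B X = B: either X = +-1, and then tr A = 2 cos (pi j / n) for some j, or A lies
  in the pencil spanned by 1 and X, and then tr AB = 0.  Hence, off Y_k, the character variety lies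
  in the Zariski closed set cut out by kappa t_mu = 0 and kappa t_c_mu P(t_c) = 0, where P vanishes
  at the other values 2 cos (pi j / n); this set misses a point of Y_k, which makes the irreducible
  line Y_k a component.  Every point of Y_k is the character of A = diag(e^(i pi k/n), e^(-i pi k/n))
  with some traceless B, and for B = [[0,1],[-1,0]] the representation is simple.
\<close>

definition mat2 :: "complex \<Rightarrow> complex \<Rightarrow> complex \<Rightarrow> complex \<Rightarrow> cmat" where
  "mat2 a b c d = (\<chi> i j. if i = 1 then (if j = 1 then a else b) else (if j = 1 then c else d))"

definition vec2 :: "complex \<Rightarrow> complex \<Rightarrow> complex^2" where
  "vec2 x y = (\<chi> i. if i = 1 then x else y)"

lemma mat2_nth [simp]:
  "mat2 a b c d $ 1 $ 1 = a" "mat2 a b c d $ 1 $ 2 = b"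
  "mat2 a b c d $ 2 $ 1 = c" "mat2 a b c d $ 2 $ 2 = d"
  by (simp_all add: mat2_def)

lemma vec2_nth [simp]: "vec2 x y $ 1 = x" "vec2 x y $ 2 = y"
  by (simp_all add: vec2_def)

lemma mat2_cases: obtains a b c d where "M = mat2 a b c d"
proof
  show "M = mat2 (M$1$1) (M$1$2) (M$2$1) (M$2$2)"
    unfolding vec_eq_iff forall_2 by simp
qed

lemma vec2_cases: obtains x y where "v = vec2 x y"
proof
  show "v = vec2 (v$1) (v$2)"
    unfolding vec_eq_iff forall_2 by simp
qed

lemma mat2_eq_iff [simp]:
  "mat2 a b c d = mat2 a' b' c' d' \<longleftrightarrow> a = a' \<and> b = b' \<and> c = c' \<and> d = d'"
  by (metis mat2_nth)

lemma vec2_eq_iff [simp]: "vec2 x y = vec2 x' y' \<longleftrightarrow> x = x' \<and> y = y'"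
  by (metis vec2_nth)

lemma mat2_mult [simp]:
  "mat2 a b c d ** mat2 e f g h = mat2 (a*e + b*g) (a*f + b*h) (c*e + d*g) (c*f + d*h)"
  unfolding matrix_matrix_mult_def vec_eq_iff forall_2 by (simp add: sum_2)

lemma mat2_mult_vec2 [simp]: "mat2 a b c d *v vec2 x y = vec2 (a*x + b*y) (c*x + d*y)"
  unfolding matrix_vector_mult_def vec_eq_iff forall_2 by (simp add: sum_2)

lemma det_mat2 [simp]: "det (mat2 a b c d) = a*d - b*c"
  by (simp add: det_2)

lemma trace_mat2 [simp]: "trace (mat2 a b c d) = a + d"
  by (simp add: trace_def sum_2)

lemma mat_1_eq_mat2: "mat 1 = mat2 1 0 0 1"
  unfolding vec_eq_iff forall_2 by (simp add: mat_def)

lemma plus_mat2 [simp]: "mat2 a b c d + mat2 e f g h = mat2 (a+e) (b+f) (c+g) (d+h)"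
  unfolding vec_eq_iff forall_2 by simp

lemma csmult_mat2 [simp]: "csmult s (mat2 a b c d) = mat2 (s*a) (s*b) (s*c) (s*d)"
  unfolding csmult_def vec_eq_iff forall_2 by simp

lemma smult_vec2 [simp]: "s *s vec2 x y = vec2 (s*x) (s*y)"
  unfolding vec_eq_iff forall_2 by simp

lemma zero_vec2: "0 = vec2 0 0"
  unfolding vec_eq_iff forall_2 by simp

lemma matrix_inv_mat2:
  assumes "a*d - b*c = 1"
  shows "matrix_inv (mat2 a b c d) = mat2 d (-b) (-c) a"
proof -
  let ?M = "mat2 a b c d" and ?N = "mat2 d (-b) (-c) a"
  have inverse: "?M ** ?N = mat 1" "?N ** ?M = mat 1"
    using assms by (simp_all add: mat_1_eq_mat2 algebra_simps)
  then have inv: "?M ** matrix_inv ?M = mat 1 \<and> matrix_inv ?M ** ?M = mat 1"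
    unfolding matrix_inv_def by (rule someI[of _ ?N, OF conjI])
  then have "matrix_inv ?M = matrix_inv ?M ** (?M ** ?N)"
    using inverse by (simp del: mat2_mult)
  also have "\<dots> = ?N"
    using inv by (simp add: matrix_mul_assoc del: mat2_mult)
  finally show ?thesis .
qed

lemma matrix_inv_mult_SL2:
  fixes B :: cmat
  assumes "det B = 1"
  shows "matrix_inv B ** B = mat 1" "B ** matrix_inv B = mat 1"
proof -
  obtain a b c d where B: "B = mat2 a b c d" by (rule mat2_cases)
  have "a*d - b*c = 1" using assms B by simp
  then show "matrix_inv B ** B = mat 1" "B ** matrix_inv B = mat 1"
    unfolding B by (simp_all add: matrix_inv_mat2 mat_1_eq_mat2 algebra_simps)
qed

lemma det_matrix_inv_SL2: "det (B::cmat) = 1 \<Longrightarrow> det (matrix_inv B) = 1"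
  using det_mul[of "matrix_inv B" B] by (simp add: matrix_inv_mult_SL2(1))

lemma trace_matrix_inv_SL2:
  fixes B :: cmat
  assumes "det B = 1"
  shows "trace (matrix_inv B) = trace B"
proof -
  obtain a b c d where B: "B = mat2 a b c d" by (rule mat2_cases)
  have "a*d - b*c = 1" using assms B by simp
  then show ?thesis unfolding B by (simp add: matrix_inv_mat2 add.commute)
qed

lemma csmult_mult_left: "csmult s M ** (N::cmat) = csmult s (M ** N)"
  by (cases M rule: mat2_cases, cases N rule: mat2_cases) (simp add: algebra_simps)

lemma csmult_mult_right: "(M::cmat) ** csmult s N = csmult s (M ** N)"
  by (cases M rule: mat2_cases, cases N rule: mat2_cases) (simp add: algebra_simps)

lemma csmult_mat_1_mult: "csmult s (mat 1) ** M = csmult s M"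
  by (simp add: csmult_mult_left)

lemma det_csmult_mat_1: "det (csmult s (mat 1)) = s^2"
  by (simp add: mat_1_eq_mat2 power2_eq_square)

lemma mpow_3: "mpow M 3 = M ** (M ** M)"
  by (simp add: numeral_3_eq_3)

lemma mpow_commute: "A ** mpow A m = mpow A m ** A"
  by (induction m) (simp_all add: matrix_mul_assoc)

lemma det_mpow: "det (mpow A m) = det A ^ m"
  by (induction m) (simp_all add: det_mul)

lemma mpow_mat2_diagonal: "mpow (mat2 l 0 0 m) j = mat2 (l^j) 0 0 (m^j)"
  by (induction j) (simp_all add: mat_1_eq_mat2)

lemma mpow_eigenvector:
  assumes "A *v v = l *s v"
  shows "mpow A m *v v = l^m *s v"
proof (induction m)
  case 0
  show ?case by simp
next
  case (Suc m)
  have "mpow A (Suc m) *v v = A *v (l^m *s v)"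
    by (simp add: Suc.IH flip: matrix_vector_mul_assoc)
  also have "\<dots> = l^Suc m *s v"
    by (simp add: vector_scalar_commute assms mult.commute)
  finally show ?case .
qed

lemma SL2_eq_scalar_multiple_if_squares_eq:
  fixes V W :: cmat
  assumes "det W = 1" "det V = 1" "W ** W = V ** V" "trace V \<noteq> 0"
  shows "\<exists>s. s \<noteq> 0 \<and> W = csmult s V"
proof -
  obtain w1 w2 w3 w4 where W: "W = mat2 w1 w2 w3 w4" by (rule mat2_cases)
  obtain u1 u2 u3 u4 where V: "V = mat2 u1 u2 u3 u4" by (rule mat2_cases)
  define tw where "tw = w1 + w4"
  define tv where "tv = u1 + u4"
  have "tv \<noteq> 0" using assms(4) V tv_def by simp
  have dets: "w1*w4 - w2*w3 = 1" "u1*u4 - u2*u3 = 1" using assms(1,2) W V by simp_all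
  have squares: "w1*w1 + w2*w3 = u1*u1 + u2*u3" "w1*w2 + w2*w4 = u1*u2 + u2*u4"
    "w3*w1 + w4*w3 = u3*u1 + u4*u3" "w3*w2 + w4*w4 = u3*u2 + u4*u4"
    using assms(3) W V by simp_all
  \<comment> \<open>Cayley-Hamilton (M^2 = tr M * M - 1 on SL2) turns equal squares into tw W = tv V.\<close>
  have lin: "tw*w1 = tv*u1" "tw*w2 = tv*u2" "tw*w3 = tv*u3" "tw*w4 = tv*u4"
    unfolding tw_def tv_def using squares dets by algebra+
  have "tw \<noteq> 0"
  proof
    assume "tw = 0"
    then have "u1 = 0" "u2 = 0" "u3 = 0" "u4 = 0" using lin \<open>tv \<noteq> 0\<close> by simp_all
    then show False using dets by simp
  qed
  with lin \<open>tv \<noteq> 0\<close> show ?thesis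
    unfolding W V by (intro exI[of _ "tv / tw"]) (simp add: field_simps)
qed

lemma commute_if_commute_square:
  fixes A B :: cmat
  assumes "A ** (B ** B) = (B ** B) ** A" "trace B \<noteq> 0"
  shows "A ** B = B ** A"
proof -
  obtain a1 a2 a3 a4 where A: "A = mat2 a1 a2 a3 a4" by (rule mat2_cases)
  obtain b1 b2 b3 b4 where B: "B = mat2 b1 b2 b3 b4" by (rule mat2_cases)
  have t: "b1 + b4 \<noteq> 0" using assms(2) B by simp
  have sq: "a1*(b1*b1 + b2*b3) + a2*(b3*b1 + b4*b3) = (b1*b1 + b2*b3)*a1 + (b1*b2 + b2*b4)*a3"
    "a1*(b1*b2 + b2*b4) + a2*(b3*b2 + b4*b4) = (b1*b1 + b2*b3)*a2 + (b1*b2 + b2*b4)*a4"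
    "a3*(b1*b1 + b2*b3) + a4*(b3*b1 + b4*b3) = (b3*b1 + b4*b3)*a1 + (b3*b2 + b4*b4)*a3"
    "a3*(b1*b2 + b2*b4) + a4*(b3*b2 + b4*b4) = (b3*b1 + b4*b3)*a2 + (b3*b2 + b4*b4)*a4"
    using assms(1) A B by simp_all
  \<comment> \<open>Each entry of [A, B^2] is tr B times the corresponding entry of [A, B].\<close>
  have "(b1 + b4) * (a1*b1 + a2*b3 - (b1*a1 + b2*a3)) = 0"
    "(b1 + b4) * (a1*b2 + a2*b4 - (b1*a2 + b2*a4)) = 0"
    "(b1 + b4) * (a3*b1 + a4*b3 - (b3*a1 + b4*a3)) = 0"
    "(b1 + b4) * (a3*b2 + a4*b4 - (b3*a2 + b4*a4)) = 0"
    using sq by algebra+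
  with t show ?thesis unfolding A B by simp
qed

text \<open>By Fricke's identity kappa (char_pt A B) = tr [A, B] - 2, which vanishes exactly on
  characters of reducible representations.\<close>

definition kappa :: "pt3 \<Rightarrow> complex" where
  "kappa p = (case p of (x, y, z) \<Rightarrow> x^2 + y^2 + z^2 - x*y*z - 4)"

lemma kappa_char_pt_commuting:
  fixes A B :: cmat
  assumes "det A = 1" "det B = 1" "A ** B = B ** A"
  shows "kappa (char_pt A B) = 0"
proof -
  obtain a1 a2 a3 a4 where A: "A = mat2 a1 a2 a3 a4" by (rule mat2_cases)
  obtain b1 b2 b3 b4 where B: "B = mat2 b1 b2 b3 b4" by (rule mat2_cases)
  have "a1*a4 - a2*a3 = 1" "b1*b4 - b2*b3 = 1"
    "a1*b1 + a2*b3 = b1*a1 + b2*a3" "a1*b2 + a2*b4 = b1*a2 + b2*a4"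
    "a3*b1 + a4*b3 = b3*a1 + b4*a3" "a3*b2 + a4*b4 = b3*a2 + b4*a4"
    using assms A B by simp_all
  then show ?thesis
    unfolding kappa_def char_pt_def A B by simp algebra
qed

lemma centralizer_nonscalar_SL2:
  fixes A X :: cmat
  assumes "A ** X = X ** A" "\<forall>c. X \<noteq> csmult c (mat 1)"
  shows "\<exists>p q. A = csmult p (mat 1) + csmult q X"
proof -
  obtain a1 a2 a3 a4 where A: "A = mat2 a1 a2 a3 a4" by (rule mat2_cases)
  obtain x1 x2 x3 x4 where X: "X = mat2 x1 x2 x3 x4" by (rule mat2_cases)
  have comm: "a1*x1 + a2*x3 = x1*a1 + x2*a3" "a1*x2 + a2*x4 = x1*a2 + x2*a4"
    "a3*x1 + a4*x3 = x3*a1 + x4*a3"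
    using assms(1) A X by simp_all
  have e1: "a2*x3 = x2*a3" and e2: "x2*(a1 - a4) = a2*(x1 - x4)" and e3: "a3*(x1 - x4) = x3*(a1 - a4)"
    using comm by algebra+
  have "x2 \<noteq> 0 \<or> x3 \<noteq> 0 \<or> x1 \<noteq> x4"
    using assms(2)[rule_format, of x1] X by (auto simp: mat_1_eq_mat2)
  then obtain q where q: "a2 = q*x2" "a3 = q*x3" "a4 - a1 = q*(x4 - x1)"
  proof (elim disjE)
    assume "x2 \<noteq> 0"
    then show thesis using e1 e2 by (intro that[of "a2/x2"]) (auto simp: field_simps)
  next
    assume "x3 \<noteq> 0"
    then show thesis using e1 e3 by (intro that[of "a3/x3"]) (auto simp: field_simps)
  next
    assume "x1 \<noteq> x4"
    then show thesis using e2 e3 by (intro that[of "(a1 - a4)/(x1 - x4)"]) (auto simp: field_simps)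
  qed
  then show ?thesis
    unfolding A X mat_1_eq_mat2 by (intro exI[of _ "a1 - q*x1"] exI[of _ q]) (simp add: algebra_simps)
qed

lemma trace_mult_eq_0_if_conjugates_to_inverse:
  fixes X B :: cmat
  assumes "det X = 1" "trace B = 0" "X ** B ** X = B"
  shows "trace (X ** B) = 0"
proof -
  obtain x1 x2 x3 x4 where X: "X = mat2 x1 x2 x3 x4" by (rule mat2_cases)
  obtain b1 b2 b3 b4 where B: "B = mat2 b1 b2 b3 b4" by (rule mat2_cases)
  have b4: "b4 = - b1" using assms(2) B by (simp add: add_eq_0_iff2)
  \<comment> \<open>X B = B X\<inverse> and tr (B X\<inverse>) = tr B tr X - tr (B X) = - tr (X B).\<close>
  have "x1*x4 - x2*x3 = 1"
    "(x1*b1 + x2*b3)*x1 + (x1*b2 - x2*b1)*x3 = b1"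
    "(x1*b1 + x2*b3)*x2 + (x1*b2 - x2*b1)*x4 = b2"
    "(x3*b1 + x4*b3)*x1 + (x3*b2 - x4*b1)*x3 = b3"
    "(x3*b1 + x4*b3)*x2 + (x3*b2 - x4*b1)*x4 = - b1"
    using assms(1,3) X B b4 by (simp_all add: algebra_simps)
  then have "x1*b1 + x2*b3 + x3*b2 - x4*b1 = 0" by algebra
  then show ?thesis unfolding X B b4 by (simp add: algebra_simps)
qed

lemma mpow_3_matrix_inv_traceless:
  fixes B :: cmat
  assumes "det B = 1" "trace B = 0"
  shows "mpow (matrix_inv B) 3 = B"
proof -
  obtain a b c d where B: "B = mat2 a b c d" by (rule mat2_cases)
  have d: "d = - a" using assms(2) B by (simp add: add_eq_0_iff2)
  have "a*d - b*c = 1" using assms(1) B by simp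
  then show ?thesis
    unfolding B d mpow_3 by (simp add: matrix_inv_mat2) algebra
qed

section \<open>Consequences of the relator\<close>

lemma relation_imp_multiple_of_square:
  fixes B X :: cmat
  assumes dB: "det B = 1" and dX: "det X = 1" and tB: "trace B \<noteq> 0"
    and rel: "X ** mpow (matrix_inv B) 3 ** X ** matrix_inv B = mat 1"
  shows "\<exists>s. s \<noteq> 0 \<and> csmult s X = B ** B"
proof -
  define \<beta> where "\<beta> = matrix_inv B"
  define W where "W = X ** mpow \<beta> 3"
  have \<beta>B: "\<beta> ** B = mat 1" "B ** \<beta> = mat 1"
    using matrix_inv_mult_SL2[OF dB] by (simp_all add: \<beta>_def)
  have WX: "W ** X = B"
  proof -
    have "W ** X = (W ** X ** \<beta>) ** B" by (simp add: \<beta>B flip: matrix_mul_assoc)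
    also have "\<dots> = B" using rel by (simp add: W_def \<beta>_def)
    finally show ?thesis .
  qed
  have "W ** W = \<beta> ** \<beta>"
  proof -
    have "W ** W = (W ** X) ** mpow \<beta> 3" by (simp add: W_def matrix_mul_assoc)
    also have "\<dots> = (B ** \<beta>) ** (\<beta> ** \<beta>)" by (simp add: WX mpow_3 matrix_mul_assoc)
    finally show ?thesis by (simp add: \<beta>B)
  qed
  moreover have d\<beta>: "det \<beta> = 1" using det_matrix_inv_SL2[OF dB] by (simp add: \<beta>_def)
  moreover have "det W = 1" by (simp add: W_def det_mul det_mpow dX d\<beta>)
  moreover have "trace \<beta> \<noteq> 0" using trace_matrix_inv_SL2[OF dB] tB by (simp add: \<beta>_def)
  ultimately obtain s where "s \<noteq> 0" and W: "W = csmult s \<beta>"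
    using SL2_eq_scalar_multiple_if_squares_eq by blast
  have "csmult s X = (B ** W) ** X"
    by (simp add: W csmult_mult_right \<beta>B csmult_mat_1_mult)
  also have "\<dots> = B ** B" by (simp add: WX flip: matrix_mul_assoc)
  finally show ?thesis using \<open>s \<noteq> 0\<close> by blast
qed

lemma relation_imp_conj_eq_if_traceless:
  fixes B X :: cmat
  assumes dB: "det B = 1" and tB: "trace B = 0"
    and rel: "X ** mpow (matrix_inv B) 3 ** X ** matrix_inv B = mat 1"
  shows "X ** B ** X = B"
proof -
  have "X ** B ** X = (X ** B ** X ** matrix_inv B) ** B"
    by (simp add: matrix_inv_mult_SL2[OF dB] flip: matrix_mul_assoc)
  also have "\<dots> = B"
    using rel by (simp add: mpow_3_matrix_inv_traceless[OF dB tB])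
  finally show ?thesis .
qed

lemma trace_mult_pencil:
  fixes X B :: cmat
  shows "trace ((csmult p (mat 1) + csmult q X) ** B) = p * trace B + q * trace (X ** B)"
  by (cases X rule: mat2_cases, cases B rule: mat2_cases) (simp add: mat_1_eq_mat2 algebra_simps)

lemma relation_character_cases:
  fixes A B X :: cmat
  assumes dA: "det A = 1" and dB: "det B = 1" and dX: "det X = 1" and AX: "A ** X = X ** A"
    and rel: "X ** mpow (matrix_inv B) 3 ** X ** matrix_inv B = mat 1"
  shows "kappa (char_pt A B) = 0 \<or> (trace B = 0 \<and> trace (A ** B) = 0) \<or>
    (trace B = 0 \<and> (\<exists>c. c^2 = 1 \<and> X = csmult c (mat 1)))"
proof (cases "trace B = 0")
  case False
  then obtain s where "csmult s X = B ** B"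
    using relation_imp_multiple_of_square[OF dB dX _ rel] by blast
  then have "A ** (B ** B) = (B ** B) ** A"
    by (metis AX csmult_mult_left csmult_mult_right)
  then have "A ** B = B ** A" using False by (rule commute_if_commute_square)
  then show ?thesis using kappa_char_pt_commuting[OF dA dB] by blast
next
  case True
  show ?thesis
  proof (cases "\<exists>c. X = csmult c (mat 1)")
    case True
    then obtain c where "X = csmult c (mat 1)" by blast
    moreover from this have "c^2 = 1" using dX det_csmult_mat_1 by simp
    ultimately show ?thesis using \<open>trace B = 0\<close> by blast
  next
    case False
    then obtain p q where "A = csmult p (mat 1) + csmult q X"
      using centralizer_nonscalar_SL2[OF AX] by blast
    moreover have "trace (X ** B) = 0"
      using trace_mult_eq_0_if_conjugates_to_inverse[OF dX \<open>trace B = 0\<close>]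
        relation_imp_conj_eq_if_traceless[OF dB \<open>trace B = 0\<close> rel] by blast
    ultimately show ?thesis using \<open>trace B = 0\<close> by (simp add: trace_mult_pencil)
  qed
qed

lemma SL2_eigenvector:
  fixes A :: cmat
  assumes "det A = 1" "l * l - trace A * l + 1 = 0"
  shows "\<exists>v. v \<noteq> 0 \<and> A *v v = l *s v"
proof -
  obtain a b c d where A: "A = mat2 a b c d" by (rule mat2_cases)
  have det: "a*d - b*c = 1" and char: "l*l - (a + d)*l + 1 = 0" using assms A by simp_all
  consider "b \<noteq> 0 \<or> l \<noteq> a" | "b = 0" "l = a" "l \<noteq> d \<or> c \<noteq> 0" | "b = 0" "l = a" "l = d" "c = 0"
    by blast
  then show ?thesis
  proof cases
    case 1
    have "c*b + d*(l - a) = l*(l - a)" using det char by algebra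
    with 1 show ?thesis unfolding A zero_vec2 by (intro exI[of _ "vec2 b (l - a)"]) (simp add: algebra_simps)
  next
    case 2
    then show ?thesis unfolding A zero_vec2
      by (intro exI[of _ "vec2 (l - d) c"]) (auto simp: algebra_simps)
  next
    case 3
    then show ?thesis unfolding A zero_vec2 by (intro exI[of _ "vec2 1 0"]) simp
  qed
qed

lemma eigenvalue_power_if_power_scalar:
  fixes A :: cmat
  assumes "v \<noteq> 0" "A *v v = l *s v" "mpow A n = csmult c (mat 1)"
  shows "l^n = c"
proof -
  have "csmult c (mat 1) *v v = c *s v"
    by (cases v rule: vec2_cases) (simp add: mat_1_eq_mat2)
  then have "l^n *s v = c *s v" using mpow_eigenvector[OF assms(2), of n] assms(3) by argo
  then show ?thesis using assms(1) by (metis vector_mul_rcancel)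
qed

lemma sum_inverse_root_of_unity:
  fixes l :: complex
  assumes "l^(2*n) = 1" "n \<ge> 1"
  shows "\<exists>j\<le>n. l + 1/l = of_real (2 * cos (pi * real j / real n))"
proof -
  obtain j where j: "j < 2*n" and lj: "l = exp (2 * of_real pi * \<i> * of_nat j / of_nat (2*n))"
    using complex_roots_unity[of "2*n"] assms by auto
  define \<theta> where "\<theta> = pi * real j / real n"
  have "l = exp (\<i> * of_real \<theta>)" unfolding lj \<theta>_def using assms(2) by (simp add: field_simps)
  then have "l + 1/l = exp (\<i> * of_real \<theta>) + exp (-(\<i> * of_real \<theta>))"
    by (simp add: exp_minus field_simps)
  also have "\<dots> = 2 * cos (of_real \<theta>)" by (simp add: cos_exp_eq)
  also have "\<dots> = of_real (2 * cos \<theta>)" by (simp add: cos_of_real)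
  finally have sum: "l + 1/l = of_real (2 * cos \<theta>)" .
  show ?thesis
  proof (cases "j \<le> n")
    case True
    then show ?thesis using sum \<theta>_def by blast
  next
    case False
    have "pi * real (2*n - j) / real n = 2*pi - \<theta>"
      using j assms(2) by (simp add: \<theta>_def field_simps)
    then have "cos \<theta> = cos (pi * real (2*n - j) / real n)" by (simp add: cos_diff)
    then show ?thesis using sum False by (intro exI[of _ "2*n - j"]) simp
  qed
qed

lemma trace_if_power_scalar:
  fixes A :: cmat
  assumes "det A = 1" "n \<ge> 1" "mpow A n = csmult c (mat 1)" "c^2 = 1"
  shows "\<exists>j\<le>n. trace A = of_real (2 * cos (pi * real j / real n))"
proof -
  define t where "t = trace A"
  define l where "l = (t + csqrt (t^2 - 4)) / 2"
  have char: "l * l - t * l + 1 = 0"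
    unfolding l_def by (simp add: field_simps power2_eq_square[symmetric]) algebra
  then have "l \<noteq> 0" by auto
  then have t: "t = l + 1/l" using char by (simp add: field_simps)
  obtain v where "v \<noteq> 0" "A *v v = l *s v"
    using SL2_eigenvector[OF assms(1)] char t_def by blast
  then have "l^n = c" using assms(3) by (rule eigenvalue_power_if_power_scalar)
  then have "l^(2*n) = 1" using assms(4) by (simp add: power_mult mult.commute)
  then show ?thesis using sum_inverse_root_of_unity assms(2) t t_def by simp
qed

lemma is_rep_traceless:
  fixes A B :: cmat
  assumes "det A = 1" "det B = 1" "trace B = 0" "mpow A n = csmult c (mat 1)" "c^2 = 1"
  shows "is_rep n A B"
proof -
  obtain a b d e where B: "B = mat2 a b d e" by (rule mat2_cases)
  have e: "e = - a" using assms(3) B by (simp add: add_eq_0_iff2)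
  have det: "a * e - b * d = 1" using assms(2) B by simp
  have "csmult c (mat 1) ** B ** csmult c (mat 1) ** matrix_inv B = mat 1"
    using det assms(5) unfolding B e
    by (simp add: matrix_inv_mat2 mat_1_eq_mat2 power2_eq_square) algebra
  then show ?thesis
    unfolding is_rep_def using assms by (simp add: mpow_3_matrix_inv_traceless)
qed

lemma mpow_diagonal_cis:
  fixes n k :: nat
  assumes "n \<ge> 1"
  defines "\<theta> \<equiv> pi * real k / real n"
  shows "mpow (mat2 (cis \<theta>) 0 0 (cis (-\<theta>))) n = csmult ((-1)^k) (mat 1)"
proof -
  have "real n * \<theta> = real k * pi" "real n * -\<theta> = - (real k * pi)"
    using assms(1) by (simp_all add: \<theta>_def)
  then have "cis \<theta> ^ n = cis (real k * pi)" "cis (-\<theta>) ^ n = cis (- (real k * pi))"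
    by (simp_all only: Complex.DeMoivre mult_minus_right)
  moreover have "cis (real k * pi) = (-1)^k" "cis (- (real k * pi)) = (-1)^k"
    by (simp_all add: cis.ctr complex_eq_iff)
  ultimately show ?thesis by (simp add: mpow_mat2_diagonal mat_1_eq_mat2)
qed

lemma is_rep_diagonal_cis:
  fixes n k :: nat and B :: cmat
  assumes "n \<ge> 1" "det B = 1" "trace B = 0"
  defines "\<theta> \<equiv> pi * real k / real n"
  shows "is_rep n (mat2 (cis \<theta>) 0 0 (cis (-\<theta>))) B"
proof (rule is_rep_traceless[OF _ assms(2,3)])
  show "det (mat2 (cis \<theta>) 0 0 (cis (-\<theta>))) = 1" by (simp add: cis_mult)
  show "mpow (mat2 (cis \<theta>) 0 0 (cis (-\<theta>))) n = csmult ((-1)^k) (mat 1)"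
    unfolding \<theta>_def using assms(1) by (rule mpow_diagonal_cis)
  show "((-1::complex)^k)^2 = 1" by (simp flip: power_mult)
qed

lemma cis_ne_cis_minus:
  fixes n k :: nat
  assumes "0 < k" "k < n"
  shows "cis (pi * real k / real n) \<noteq> cis (- (pi * real k / real n))"
proof -
  have "sin (pi * real k / real n) > 0"
    using assms by (intro sin_gt_zero) (simp_all add: field_simps)
  then show ?thesis by (auto simp: complex_eq_iff)
qed

lemma Yk_eq_vertical_line: "Yk n k = range (\<lambda>z. (of_real (2 * cos (pi * real k / real n)), 0, z))"
  unfolding Yk_def by auto

lemma Yk_subset_charvar:
  assumes "0 < k" "k < n"
  shows "Yk n k \<subseteq> charvar n"
proof
  fix p assume "p \<in> Yk n k"
  then obtain z where p: "p = (of_real (2 * cos (pi * real k / real n)), 0, z)"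
    unfolding Yk_eq_vertical_line by blast
  define \<theta> where "\<theta> = pi * real k / real n"
  define \<alpha> where "\<alpha> = z / (cis \<theta> - cis (-\<theta>))"
  define A where "A = mat2 (cis \<theta>) 0 0 (cis (-\<theta>))"
  define B where "B = mat2 \<alpha> 1 (-(1 + \<alpha>^2)) (-\<alpha>)"
  have rep: "is_rep n A B"
    unfolding A_def \<theta>_def using assms by (intro is_rep_diagonal_cis) (simp_all add: B_def power2_eq_square)
  have "char_pt A B = (cis \<theta> + cis (-\<theta>), 0, \<alpha> * (cis \<theta> - cis (-\<theta>)))"
    unfolding char_pt_def A_def B_def by (simp add: algebra_simps)
  moreover have "cis \<theta> - cis (-\<theta>) \<noteq> 0" using cis_ne_cis_minus[OF assms] by (simp add: \<theta>_def)
  then have "\<alpha> * (cis \<theta> - cis (-\<theta>)) = z" by (simp add: \<alpha>_def)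
  moreover have "cis \<theta> + cis (-\<theta>) = of_real (2 * cos \<theta>)" by (simp add: complex_eq_iff)
  ultimately have "char_pt A B = p" by (simp add: p \<theta>_def)
  with rep show "p \<in> charvar n" unfolding charvar_def by blast
qed

lemma sum_csmult_four:
  assumes "distinct [G1, G2, G3, G4]"
  shows "\<exists>c. csmult a1 G1 + csmult a2 G2 + csmult a3 G3 + csmult a4 G4 =
    (\<Sum>g\<in>{G1, G2, G3, G4}. csmult (c g) g)"
proof -
  define c where "c g = (if g = G1 then a1 else if g = G2 then a2 else if g = G3 then a3 else a4)" for g
  have c: "c G1 = a1" "c G2 = a2" "c G3 = a3" "c G4 = a4" using assms by (auto simp: c_def)
  have "(\<Sum>g\<in>{G1, G2, G3, G4}. f g) = f G1 + f G2 + f G3 + f G4" for f :: "cmat \<Rightarrow> cmat"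
    using assms by (simp add: add.assoc)
  then show ?thesis by (intro exI[of _ c]) (simp only: c)
qed

lemma simple_rep_diagonal:
  assumes "l * m = 1" "l \<noteq> m"
  shows "simple_rep (mat2 l 0 0 m) (mat2 0 1 (-1) 0)"
  unfolding simple_rep_def
proof
  fix M :: cmat
  let ?I = "mat2 1 0 0 1" and ?A = "mat2 l 0 0 m" and ?B = "mat2 0 1 (-1) 0"
  let ?S = "{?I, ?A, ?B, ?A ** ?B}"
  obtain m1 m2 m3 m4 where M_eq: "M = mat2 m1 m2 m3 m4" by (rule mat2_cases)
  define b where "b = (m1 - m4) / (l - m)"
  define d where "d = (m2 + m3) / (l - m)"
  have "l - m \<noteq> 0" "l \<noteq> 1" "l \<noteq> 0" using assms by auto
  then have m4: "m4 = m1 - b * (l - m)" and m3: "m3 = d * (l - m) - m2"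
    by (simp_all add: b_def d_def)
  have "mat2 m1 m2 m3 m4 = csmult (m1 - b * l) ?I + csmult b ?A + csmult (m2 - d * l) ?B + csmult d (?A ** ?B)"
    unfolding m3 m4 by (simp add: algebra_simps)
  then have M_comb: "M = csmult (m1 - b * l) ?I + csmult b ?A + csmult (m2 - d * l) ?B + csmult d (?A ** ?B)"
    unfolding M_eq .
  have "distinct [?I, ?A, ?B, ?A ** ?B]" using \<open>l \<noteq> 1\<close> \<open>l \<noteq> 0\<close> assms by auto
  from sum_csmult_four[OF this, of "m1 - b * l" b "m2 - d * l" d]
  obtain c where c: "M = (\<Sum>g\<in>?S. csmult (c g) g)" unfolding M_comb by blast
  have "?A ** ?B \<in> gen_group ?A ?B" by (intro gen_group.mult gen_group.genA gen_group.genB)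
  then have S: "?S \<subseteq> gen_group ?A ?B"
    using gen_group.one[of ?A ?B] gen_group.genA gen_group.genB by (simp add: mat_1_eq_mat2)
  show "\<exists>S c. finite S \<and> S \<subseteq> gen_group ?A ?B \<and> M = (\<Sum>g\<in>S. csmult (c g) g)"
    using S c by (intro exI[of _ ?S] exI[of _ c]) simp
qed

section \<open>The Zariski topology on vertical lines\<close>

lemma poly3_fst: "fst \<in> poly3"
  using poly3.px by (simp add: case_prod_unfold)

lemma poly3_fst_snd: "(\<lambda>p. fst (snd p)) \<in> poly3"
  using poly3.py by (simp add: case_prod_unfold)

lemma poly3_snd_snd: "(\<lambda>p. snd (snd p)) \<in> poly3"
  using poly3.pz by (simp add: case_prod_unfold)

lemma poly3_diff: "f \<in> poly3 \<Longrightarrow> g \<in> poly3 \<Longrightarrow> (\<lambda>p. f p - g p) \<in> poly3"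
  using poly3.add[OF _ poly3.mul[OF poly3.const[of "-1"]]] by simp

lemma poly3_prod: "finite S \<Longrightarrow> (\<And>s. s \<in> S \<Longrightarrow> f s \<in> poly3) \<Longrightarrow> (\<lambda>p. \<Prod>s\<in>S. f s p) \<in> poly3"
proof (induction S rule: finite_induct)
  case empty
  then show ?case using poly3.const[of 1] by simp
next
  case (insert s S)
  then show ?case using poly3.mul[of "f s" "\<lambda>p. \<Prod>s\<in>S. f s p"] by simp
qed

lemma kappa_poly3: "kappa \<in> poly3"
proof -
  let ?x = "\<lambda>p. fst p" and ?y = "\<lambda>p. fst (snd p)" and ?z = "\<lambda>p. snd (snd p)"
  have "(\<lambda>p. ?x p * ?x p + ?y p * ?y p + ?z p * ?z p - ?x p * ?y p * ?z p - (\<lambda>_. 4) p) \<in> poly3"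
    using poly3_fst poly3_fst_snd poly3_snd_snd
    by (intro poly3_diff poly3.add poly3.mul poly3.const) simp_all
  moreover have "(\<lambda>p. ?x p * ?x p + ?y p * ?y p + ?z p * ?z p - ?x p * ?y p * ?z p - (\<lambda>_. 4) p) = kappa"
    by (rule ext) (simp add: kappa_def case_prod_unfold power2_eq_square)
  ultimately show ?thesis by simp
qed

lemma poly3_restrict_vertical_line: "f \<in> poly3 \<Longrightarrow> \<exists>q. \<forall>z. f (x0, y0, z) = poly q z"
proof (induction rule: poly3.induct)
  case (const a)
  show ?case by (intro exI[of _ "[:a:]"]) simp
next
  case px
  show ?case by (intro exI[of _ "[:x0:]"]) simp
next
  case py
  show ?case by (intro exI[of _ "[:y0:]"]) simp
next
  case pz
  show ?case by (intro exI[of _ "[:0, 1:]"]) simp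
next
  case (add f g)
  then obtain q1 q2 where "\<forall>z. f (x0, y0, z) = poly q1 z" "\<forall>z. g (x0, y0, z) = poly q2 z" by blast
  then show ?case by (intro exI[of _ "q1 + q2"]) simp
next
  case (mul f g)
  then obtain q1 q2 where "\<forall>z. f (x0, y0, z) = poly q1 z" "\<forall>z. g (x0, y0, z) = poly q2 z" by blast
  then show ?case by (intro exI[of _ "q1 * q2"]) simp
qed

lemma zariski_closed_common_zeros:
  assumes "f \<in> poly3" "g \<in> poly3"
  shows "zariski_closed {p. f p = 0 \<and> g p = 0}"
proof -
  have "{p. f p = 0 \<and> g p = 0} = {p. \<forall>h\<in>{f, g}. h p = 0}" by auto
  then show ?thesis unfolding zariski_closed_def using assms by blast
qed

lemma zariski_closed_vertical_line: "zariski_closed (range (\<lambda>z. (x0, y0, z)))"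
proof -
  have "zariski_closed {p. fst p - x0 = 0 \<and> fst (snd p) - y0 = 0}"
    using poly3_diff[OF poly3_fst poly3.const] poly3_diff[OF poly3_fst_snd poly3.const]
    by (intro zariski_closed_common_zeros) simp_all
  moreover have "range (\<lambda>z. (x0, y0, z)) = {p. fst p - x0 = 0 \<and> fst (snd p) - y0 = 0}" by auto
  ultimately show ?thesis by metis
qed

lemma finite_vertical_line_inter_closed:
  assumes "zariski_closed C" "(x0, y0, z0) \<notin> C"
  shows "finite {z. (x0, y0, z) \<in> C}"
proof -
  obtain F where F: "F \<subseteq> poly3" "C = {p. \<forall>f\<in>F. f p = 0}"
    using assms(1) unfolding zariski_closed_def by blast
  then obtain f where f: "f \<in> F" "f (x0, y0, z0) \<noteq> 0" using assms(2) by blast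
  obtain q where q: "\<forall>z. f (x0, y0, z) = poly q z"
    using poly3_restrict_vertical_line f F by blast
  have "q \<noteq> 0" using f q by auto
  then have "finite {z. poly q z = 0}" by (rule poly_roots_finite)
  moreover have "{z. (x0, y0, z) \<in> C} \<subseteq> {z. poly q z = 0}" using F f q by auto
  ultimately show ?thesis by (rule finite_subset[rotated])
qed

lemma zariski_irreducible_vertical_line: "zariski_irreducible (range (\<lambda>z. (x0, y0, z)))"
  unfolding zariski_irreducible_def
proof (intro conjI allI impI)
  show "range (\<lambda>z. (x0, y0, z)) \<noteq> {}" by simp
  fix C1 C2
  assume C: "zariski_closed C1 \<and> zariski_closed C2 \<and> range (\<lambda>z. (x0, y0, z)) \<subseteq> C1 \<union> C2"
  show "range (\<lambda>z. (x0, y0, z)) \<subseteq> C1 \<or> range (\<lambda>z. (x0, y0, z)) \<subseteq> C2"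
  proof (rule ccontr)
    assume "\<not> ?thesis"
    then obtain z1 z2 where "(x0, y0, z1) \<notin> C1" "(x0, y0, z2) \<notin> C2" by auto
    then have "finite ({z. (x0, y0, z) \<in> C1} \<union> {z. (x0, y0, z) \<in> C2})"
      using C finite_vertical_line_inter_closed by simp
    moreover have "{z. (x0, y0, z) \<in> C1} \<union> {z. (x0, y0, z) \<in> C2} = UNIV" using C by auto
    ultimately show False by (simp add: infinite_UNIV_char_0)
  qed
qed

lemma irreducible_componentI:
  assumes "Z \<subseteq> X" "zariski_irreducible Z" "zariski_closed Z"
    and "zariski_closed C" "X \<subseteq> Z \<union> C" "\<not> Z \<subseteq> C"
  shows "irreducible_component X Z"
  unfolding irreducible_component_def
proof (intro conjI assms(1,2) allI impI)
  fix W assume W: "zariski_irreducible W \<and> Z \<subseteq> W \<and> W \<subseteq> X"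
  then have "W \<subseteq> Z \<or> W \<subseteq> C"
    using assms(3-5) unfolding zariski_irreducible_def by blast
  then show "W = Z" using W assms(6) by blast
qed

section \<open>The components Y_k\<close>

lemma charvar_cases:
  assumes "p \<in> charvar n" "n \<ge> 1"
  obtains "kappa p = 0"
    | "fst (snd p) = 0" "snd (snd p) = 0"
    | j where "j \<le> n" "fst (snd p) = 0" "fst p = of_real (2 * cos (pi * real j / real n))"
proof -
  obtain A B where rep: "is_rep n A B" and p: "p = char_pt A B"
    using assms(1) unfolding charvar_def by blast
  have dA: "det A = 1" and dB: "det B = 1"
    and rel: "mpow A n ** mpow (matrix_inv B) 3 ** mpow A n ** matrix_inv B = mat 1"
    using rep unfolding is_rep_def by auto
  have "det (mpow A n) = 1" by (simp add: det_mpow dA)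
  from relation_character_cases[OF dA dB this mpow_commute rel] p that
  show thesis
    unfolding char_pt_def using trace_if_power_scalar[OF dA assms(2)] by auto
qed

lemma charvar_subset_Yk_union_closed:
  fixes n k :: nat
  assumes "n \<ge> 1"
  obtains C where "zariski_closed C" "charvar n \<subseteq> Yk n k \<union> C" "\<not> Yk n k \<subseteq> C"
proof -
  define c0 where "c0 = complex_of_real (2 * cos (pi * real k / real n))"
  define S where "S = (\<lambda>j. complex_of_real (2 * cos (pi * real j / real n))) ` {..n} - {c0}"
  define P where "P p = (\<Prod>s\<in>S. fst p - s)" for p :: pt3
  define C where "C = {p. kappa p * fst (snd p) = 0 \<and> kappa p * snd (snd p) * P p = 0}"
  have "finite S" by (simp add: S_def)
  then have "P \<in> poly3"
    unfolding P_def[abs_def] using poly3_fst by (intro poly3_prod poly3_diff poly3.const)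
  then have "zariski_closed C"
    unfolding C_def using kappa_poly3 poly3_fst_snd poly3_snd_snd
    by (intro zariski_closed_common_zeros poly3.mul)
  moreover have "charvar n \<subseteq> Yk n k \<union> C"
  proof
    fix p assume "p \<in> charvar n"
    then show "p \<in> Yk n k \<union> C"
    proof (rule charvar_cases[OF _ assms])
      fix j assume j: "j \<le> n" "fst (snd p) = 0" "fst p = of_real (2 * cos (pi * real j / real n))"
      then have "fst p = c0 \<or> fst p \<in> S" unfolding S_def by auto
      moreover have "fst p \<in> S \<Longrightarrow> P p = 0" unfolding P_def using \<open>finite S\<close> by simp
      ultimately show ?thesis using j unfolding Yk_def C_def c0_def by (cases p) auto
    qed (simp_all add: C_def)
  qed
  moreover have "(c0, 0, 3) \<in> Yk n k" unfolding Yk_def c0_def by simp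
  moreover have "(c0, 0, 3) \<notin> C"
  proof -
    have "kappa (c0, 0, 3) = of_real ((2 * cos (pi * real k / real n))^2 + 5)"
      unfolding kappa_def c0_def by (simp add: power2_eq_square)
    moreover have "(2 * cos (pi * real k / real n))^2 + 5 \<noteq> 0"
      by (smt (verit) zero_le_power2)
    ultimately have "kappa (c0, 0, 3) \<noteq> 0" by (simp only: of_real_eq_0_iff) simp
    moreover have "P (c0, 0, 3) \<noteq> 0" unfolding P_def using \<open>finite S\<close> by (simp add: S_def)
    ultimately show ?thesis unfolding C_def by simp
  qed
  ultimately show thesis using that by blast
qed

lemma simple_rep_on_Yk:
  fixes n k :: nat
  assumes "0 < k" "k < n"
  shows "\<exists>A B. is_rep n A B \<and> simple_rep A B \<and> char_pt A B \<in> Yk n k"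
proof (intro exI conjI)
  define \<theta> where "\<theta> = pi * real k / real n"
  let ?A = "mat2 (cis \<theta>) 0 0 (cis (-\<theta>))" and ?B = "mat2 0 1 (-1) 0"
  show "is_rep n ?A ?B"
    unfolding \<theta>_def using assms by (intro is_rep_diagonal_cis) simp_all
  show "simple_rep ?A ?B"
    using cis_ne_cis_minus[OF assms] by (intro simple_rep_diagonal) (simp_all add: cis_mult \<theta>_def)
  show "char_pt ?A ?B \<in> Yk n k"
    unfolding char_pt_def Yk_def \<theta>_def by (simp add: complex_eq_iff)
qed

theorem mainTheorem15:
  fixes n k :: nat
  assumes "n \<ge> 2" and "1 \<le> k" and "k \<le> n - 1"
  shows "Yk n k \<subseteq> charvar n \<and> irreducible_component (charvar n) (Yk n k) \<and>
         (\<exists>A B. is_rep n A B \<and> simple_rep A B \<and> char_pt A B \<in> Yk n k)"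
proof (intro conjI)
  have k: "0 < k" "k < n" and "n \<ge> 1" using assms by auto
  from k show Y_sub: "Yk n k \<subseteq> charvar n" by (rule Yk_subset_charvar)
  obtain C where "zariski_closed C" "charvar n \<subseteq> Yk n k \<union> C" "\<not> Yk n k \<subseteq> C"
    using charvar_subset_Yk_union_closed[OF \<open>n \<ge> 1\<close>] by blast
  then show "irreducible_component (charvar n) (Yk n k)"
    using Y_sub zariski_irreducible_vertical_line zariski_closed_vertical_line
    unfolding Yk_eq_vertical_line by (intro irreducible_componentI) auto
  show "\<exists>A B. is_rep n A B \<and> simple_rep A B \<and> char_pt A B \<in> Yk n k"
    using k by (rule simple_rep_on_Yk)
qed

end
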